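(* Let $T$ be a string of length $n$ and $1\le i\le j<n$. For any interval $[s,t]$ with $i\le s<t\le j$, we have $[s,t]\in\mathsf{MUS}(T[i..j])$ and $[s,t]\notin\mathsf{MUS}(T[i..j+1])$ if and only if $T[s..t]=\mathit{sqs}_{i,j+1}$ (as strings) and $\#\mathit{occ}_{T[i..j+1]}(\mathit{sqs}_{i,j+1})=2$.
   Context: $T[a..b]$ denotes the substring of $T$ from position $a$ to $b$. For strings $S,w$, $\#\mathit{occ}_S(w)$ is the number of positions at which $w$ occurs in $S$, with $\#\mathit{occ}_S(\varepsilon)=|S|+1$. A substring $w$ of $S$ is unique in $S$ if $\#\mathit{occ}_S(w)=1$ and repeating if $\#\mathit{occ}_S(w)\ge 2$. For $1\le i\le j\le n$, $\mathsf{MUS}(T[i..j])$ is the set of intervals $[s,t]$ (positions in $T$) with $i\le s\le t\le j$ such that $T[s..t]$ is unique in $T[i..j]$ and every proper substring of $T[s..t]$ (including the empty string) is repeating in $T[i..j]$. $\mathit{sqs}_{i,j}$ is the shortest suffix of $T[i..j]$ that occurs at most twice in $T[i..j]$. *)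

theory Defs
  imports Main
begin

text \<open>Strings are lists; positions are 1-based. substr T a b is T[a..b].\<close>
definition substr :: "'a list \<Rightarrow> nat \<Rightarrow> nat \<Rightarrow> 'a list" where
  "substr T a b = take (Suc b - a) (drop (a - 1) T)"

text \<open>Number of occurrences of w in S (the empty string occurs length S + 1 times).\<close>
definition occ :: "'a list \<Rightarrow> 'a list \<Rightarrow> nat" where
  "occ S w = card {k. k + length w \<le> length S \<and> take (length w) (drop k S) = w}"

definition unique_in :: "'a list \<Rightarrow> 'a list \<Rightarrow> bool" where
  "unique_in S w \<longleftrightarrow> occ S w = 1"

definition repeating_in :: "'a list \<Rightarrow> 'a list \<Rightarrow> bool" where
  "repeating_in S w \<longleftrightarrow> occ S w \<ge> 2"

definition MUS :: "'a list \<Rightarrow> nat \<Rightarrow> nat \<Rightarrow> (nat \<times> nat) set" where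
  "MUS T i j = {(s, t). i \<le> s \<and> s \<le> t \<and> t \<le> j \<and>
      unique_in (substr T i j) (substr T s t) \<and>
      (\<forall>x w y. substr T s t = x @ w @ y \<and> length w < length (substr T s t)
          \<longrightarrow> repeating_in (substr T i j) w)}"

definition sqs :: "'a list \<Rightarrow> 'a list" where
  "sqs S = drop (length S - (LEAST l. l \<le> length S \<and> occ S (drop (length S - l) S) \<le> 2)) S"

end

theory Submission
  imports Defs "HOL-Library.Sublist"
begin

text \<open>Appending a letter c to S creates exactly one new occurrence of every suffix of
  S @ [c] and no other new occurrence. A minimal unique substring u of S therefore stops
  being one in S @ [c] exactly when u becomes a suffix occurring twice. Its proper suffix
  tl u, repeating in S and also a suffix, then occurs at least three times, and so do all
  shorter suffixes; hence u is the shortest suffix occurring at most twice. Conversely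
  minimality of sqs makes tl u repeating in S, and butlast u repeats in S because each of
  the two occurrences of u in S @ [c] starts an occurrence of butlast u inside S.\<close>

definition occurrences :: "'a list \<Rightarrow> 'a list \<Rightarrow> nat set" where
  "occurrences S w = {k. k + length w \<le> length S \<and> take (length w) (drop k S) = w}"

lemma occ_eq_card_occurrences: "occ S w = card (occurrences S w)"
  by (simp add: occ_def occurrences_def)

lemma finite_occurrences: "finite (occurrences S w)"
  by (rule finite_subset[of _ "{..length S}"]) (auto simp: occurrences_def)

lemma occ_self: "occ S S = 1"
proof -
  have "occurrences S S = {0}" by (auto simp: occurrences_def)
  thus ?thesis by (simp add: occ_eq_card_occurrences)
qed

lemma occ_antimono_sublist:
  assumes "sublist v w"
  shows "occ S w \<le> occ S v"
proof -
  obtain x y where w: "w = x @ v @ y" using assms by (auto simp: sublist_def)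
  have shift: "(\<lambda>k. k + length x) ` occurrences S w \<subseteq> occurrences S v"
  proof
    fix z assume "z \<in> (\<lambda>k. k + length x) ` occurrences S w"
    then obtain k where z: "z = k + length x" and k: "k \<in> occurrences S w" by blast
    have at_k: "take (length w) (drop k S) = w" and fits: "k + length w \<le> length S"
      using k by (auto simp: occurrences_def)
    have "take (length v) (drop (k + length x) S)
        = take (length v) (drop (length x) (take (length w) (drop k S)))"
      using w by (simp add: drop_take add.commute)
    also have "\<dots> = take (length v) (drop (length x) w)" by (simp only: at_k)
    also have "\<dots> = v" using w by simp
    finally show "z \<in> occurrences S v" using fits w by (simp add: occurrences_def z)
  qed
  have "card (occurrences S w) \<le> card (occurrences S v)"
    by (rule card_inj_on_le[OF _ shift finite_occurrences]) (simp add: inj_on_def)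
  thus ?thesis by (simp add: occ_eq_card_occurrences)
qed

lemma suffix_iff_drop:
  "suffix w S \<longleftrightarrow> length w \<le> length S \<and> drop (length S - length w) S = w"
proof
  assume "suffix w S"
  then obtain zs where "S = zs @ w" by (auto simp: suffix_def)
  thus "length w \<le> length S \<and> drop (length S - length w) S = w" by simp
qed (metis suffix_drop)

lemma mem_occurrences_at_end:
  assumes "k + length w = length L"
  shows "k \<in> occurrences L w \<longleftrightarrow> suffix w L"
proof -
  have "take (length w) (drop k L) = drop k L" and "k = length L - length w"
    using assms by simp_all
  thus ?thesis using assms by (simp add: occurrences_def suffix_iff_drop)
qed

lemma occurrences_snoc:
  "occurrences (S @ [c]) w =
     occurrences S w \<union> (if suffix w (S @ [c]) then {Suc (length S) - length w} else {})"
proof -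
  have at_end: "k \<in> occurrences (S @ [c]) w \<longleftrightarrow> suffix w (S @ [c]) \<and> k = Suc (length S) - length w"
    if "k + length w = Suc (length S)" for k
    using that mem_occurrences_at_end[of k w "S @ [c]"] by auto
  have inside: "k \<in> occurrences (S @ [c]) w \<longleftrightarrow> k \<in> occurrences S w"
    if "k + length w \<le> length S" for k
    using that by (simp add: occurrences_def)
  show ?thesis
  proof (intro set_eqI)
    fix k
    consider "k + length w \<le> length S" | "k + length w = Suc (length S)"
      | "k + length w > Suc (length S)" by linarith
    thus "k \<in> occurrences (S @ [c]) w \<longleftrightarrow>
        k \<in> occurrences S w \<union> (if suffix w (S @ [c]) then {Suc (length S) - length w} else {})"
      using at_end inside suffix_length_le[of w "S @ [c]"]
      by cases (auto simp: occurrences_def)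
  qed
qed

lemma occ_snoc: "occ (S @ [c]) w = occ S w + (if suffix w (S @ [c]) then 1 else 0)"
proof -
  have "Suc (length S) - length w \<notin> occurrences S w" if "suffix w (S @ [c])"
    using that suffix_length_le[OF that] by (auto simp: occurrences_def)
  thus ?thesis
    by (simp add: occ_eq_card_occurrences occurrences_snoc finite_occurrences)
qed

lemma occ_snoc_snoc_le: "occ (S @ [c]) (w @ [a]) \<le> occ S w"
proof -
  have "occurrences (S @ [c]) (w @ [a]) \<subseteq> occurrences S w"
  proof
    fix k assume "k \<in> occurrences (S @ [c]) (w @ [a])"
    hence fits: "k + length w \<le> length S"
      and at_k: "take (Suc (length w)) (drop k (S @ [c])) = w @ [a]"
      by (auto simp: occurrences_def)
    have "take (length w) (take (Suc (length w)) L) = take (length w) L" for L :: "'a list"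
      by simp
    hence "take (length w) (drop k (S @ [c])) = take (length w) (w @ [a])" using at_k by metis
    hence "take (length w) (drop k (S @ [c])) = w" by simp
    thus "k \<in> occurrences S w" using fits by (simp add: occurrences_def)
  qed
  thus ?thesis
    by (simp add: occ_eq_card_occurrences card_mono finite_occurrences)
qed

lemma suffix_sqs: "suffix (sqs S) S"
  by (simp add: sqs_def suffix_drop)

lemma sqs_shortest:
  assumes "suffix v S" and "occ S v \<le> 2"
  shows "length (sqs S) \<le> length v"
proof -
  let ?P = "\<lambda>l. l \<le> length S \<and> occ S (drop (length S - l) S) \<le> 2"
  have "?P (length v)" using assms by (simp add: suffix_iff_drop)
  hence "Least ?P \<le> length v" by (rule Least_le)
  moreover have "Least ?P \<le> length S" using calculation suffix_length_le[OF assms(1)] by linarith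
  ultimately show ?thesis by (simp add: sqs_def)
qed

lemma occ_sqs_le: "occ S (sqs S) \<le> 2"
proof -
  let ?P = "\<lambda>l. l \<le> length S \<and> occ S (drop (length S - l) S) \<le> 2"
  have "?P (length S)" using occ_self[of S] by simp
  hence "?P (Least ?P)" by (rule LeastI)
  thus ?thesis by (simp add: sqs_def)
qed

lemma sqs_eqI:
  assumes "suffix u S" and "occ S u \<le> 2"
    and shorter: "\<And>v. suffix v S \<Longrightarrow> length v < length u \<Longrightarrow> 2 < occ S v"
  shows "sqs S = u"
proof -
  have "length (sqs S) = length u"
    using sqs_shortest[OF assms(1,2)] shorter[OF suffix_sqs] occ_sqs_le[of S]
    by (meson le_less not_le)
  thus ?thesis using assms(1) suffix_sqs[of S] by (metis suffix_iff_drop)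
qed

definition minimal_unique :: "'a list \<Rightarrow> 'a list \<Rightarrow> bool" where
  "minimal_unique S u \<longleftrightarrow> unique_in S u \<and>
     (\<forall>x w y. u = x @ w @ y \<and> length w < length u \<longrightarrow> repeating_in S w)"

lemma mem_MUS_iff:
  "(s, t) \<in> MUS T i j \<longleftrightarrow> i \<le> s \<and> s \<le> t \<and> t \<le> j \<and> minimal_unique (substr T i j) (substr T s t)"
  by (simp add: MUS_def minimal_unique_def)

text \<open>Every proper substring of u lies inside tl u or inside butlast u.\<close>

lemma minimal_unique_iff:
  assumes "u \<noteq> []"
  shows "minimal_unique S u \<longleftrightarrow> occ S u = 1 \<and> 2 \<le> occ S (tl u) \<and> 2 \<le> occ S (butlast u)"
proof
  assume "minimal_unique S u"
  moreover have "u = [hd u] @ tl u @ []" and "u = [] @ butlast u @ [last u]"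
    using assms by simp_all
  ultimately show "occ S u = 1 \<and> 2 \<le> occ S (tl u) \<and> 2 \<le> occ S (butlast u)"
    using assms unfolding minimal_unique_def unique_in_def repeating_in_def
    by (metis length_butlast length_tl diff_less length_greater_0_conv zero_less_one)
next
  assume counts: "occ S u = 1 \<and> 2 \<le> occ S (tl u) \<and> 2 \<le> occ S (butlast u)"
  have "2 \<le> occ S w" if u: "u = x @ w @ y" and shorter: "length w < length u" for x w y
  proof (cases x)
    case Nil
    with u shorter obtain y' a where "y = y' @ [a]" by (cases y rule: rev_cases) auto
    with u Nil have "sublist w (butlast u)" by (simp add: butlast_append)
    thus ?thesis using counts occ_antimono_sublist order_trans by blast
  next
    case (Cons a x')
    with u have "sublist w (tl u)" by (auto simp: sublist_def)
    thus ?thesis using counts occ_antimono_sublist order_trans by blast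
  qed
  thus "minimal_unique S u"
    using counts unfolding minimal_unique_def unique_in_def repeating_in_def by blast
qed

theorem minimal_unique_lost_by_snoc_iff:
  assumes "u \<noteq> []"
  shows "minimal_unique S u \<and> \<not> minimal_unique (S @ [c]) u \<longleftrightarrow>
         u = sqs (S @ [c]) \<and> occ (S @ [c]) (sqs (S @ [c])) = 2"
proof
  assume lost: "minimal_unique S u \<and> \<not> minimal_unique (S @ [c]) u"
  hence u_S: "occ S u = 1" and tl_S: "2 \<le> occ S (tl u)" and butlast_S: "2 \<le> occ S (butlast u)"
    using minimal_unique_iff[OF assms] by auto
  hence "occ (S @ [c]) u \<noteq> 1"
    using lost minimal_unique_iff[OF assms] by (auto simp: occ_snoc)
  hence u_suffix: "suffix u (S @ [c])" and u_twice: "occ (S @ [c]) u = 2"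
    using u_S by (auto simp: occ_snoc split: if_splits)
  have tl_suffix: "suffix (tl u) (S @ [c])" using suffix_order.trans[OF suffix_tl u_suffix] .
  have tl_thrice: "3 \<le> occ (S @ [c]) (tl u)" using tl_S tl_suffix by (simp add: occ_snoc)
  have "2 < occ (S @ [c]) v" if "suffix v (S @ [c])" and "length v < length u" for v
  proof -
    have "suffix v (tl u)" using suffix_length_suffix[OF that(1) tl_suffix] that(2) by simp
    hence "occ (S @ [c]) (tl u) \<le> occ (S @ [c]) v" by (simp add: occ_antimono_sublist)
    with tl_thrice show ?thesis by simp
  qed
  hence "sqs (S @ [c]) = u" using u_suffix u_twice by (intro sqs_eqI) auto
  with u_twice show "u = sqs (S @ [c]) \<and> occ (S @ [c]) (sqs (S @ [c])) = 2" by simp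
next
  assume "u = sqs (S @ [c]) \<and> occ (S @ [c]) (sqs (S @ [c])) = 2"
  hence u: "u = sqs (S @ [c])" and u_twice: "occ (S @ [c]) u = 2" by auto
  have u_suffix: "suffix u (S @ [c])" unfolding u by (rule suffix_sqs)
  have "2 < occ (S @ [c]) (tl u)"
    using sqs_shortest[OF suffix_order.trans[OF suffix_tl u_suffix]] u assms
    by (metis not_le length_tl diff_less length_greater_0_conv zero_less_one)
  moreover have "2 \<le> occ S (butlast u)"
    using occ_snoc_snoc_le[of S c "butlast u" "last u"] u_twice assms by simp
  ultimately have "minimal_unique S u"
    using u_suffix u_twice minimal_unique_iff[OF assms]
    by (auto simp: occ_snoc split: if_splits)
  thus "minimal_unique S u \<and> \<not> minimal_unique (S @ [c]) u"
    using u_twice minimal_unique_iff[OF assms] by simp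
qed

lemma substr_extend_right:
  assumes "1 \<le> i" and "i \<le> Suc j" and "j < length T"
  shows "substr T i (Suc j) = substr T i j @ [T ! j]"
proof -
  have "Suc (Suc j) - i = Suc (Suc j - i)" and "Suc j - i < length (drop (i - 1) T)"
    and "drop (i - 1) T ! (Suc j - i) = T ! j"
    using assms by auto
  thus ?thesis using assms by (simp add: substr_def take_Suc_conv_app_nth)
qed

lemma substr_nonempty: "s \<le> t \<Longrightarrow> t < length T \<Longrightarrow> substr T s t \<noteq> []"
  by (simp add: substr_def)

theorem lemma3:
  fixes T :: "'a list" and n i j s t :: nat
  assumes "length T = n" and "1 \<le> i" and "i \<le> j" and "j < n"
    and "i \<le> s" and "s < t" and "t \<le> j"
  shows "((s, t) \<in> MUS T i j \<and> (s, t) \<notin> MUS T i (j + 1)) \<longleftrightarrow>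
         (substr T s t = sqs (substr T i (j + 1)) \<and>
          occ (substr T i (j + 1)) (sqs (substr T i (j + 1))) = 2)"
proof -
  have extend: "substr T i (j + 1) = substr T i j @ [T ! j]"
    using substr_extend_right[of i j T] assms by simp
  have "substr T s t \<noteq> []" by (rule substr_nonempty) (use assms in auto)
  from minimal_unique_lost_by_snoc_iff[OF this, of "substr T i j" "T ! j"]
  show ?thesis using assms unfolding mem_MUS_iff extend by simp
qed

end
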